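(* Let $N=\{1,\dots,n\}$, let $\tilde Q\in\mathbb{R}^{n\times n}$ be symmetric positive definite, $\tilde d\in\mathbb{R}^n$, and $a,b\in\mathbb{R}^n$ with $b\le a$ componentwise. Let $A,B\subseteq N$ be disjoint, $I=N\setminus(A\cup B)$, and let $(x,s,t)$ be the KKT solution for $(A,B)$. Let $C=\{i: x_i<b_i \text{ or } s_i<0\}$, $D=\{i: x_i>a_i \text{ or } t_i>0\}$, and let $(y,u,v)$ be the KKT solution for $(C,D)$. Define $S=\{i\in A: s_i\ge0\}$, $T=\{i\in B: t_i\le 0\}$, $U=\{i\in I: x_i<b_i\}$, $V=\{i\in I: x_i>a_i\}$, $R=I\setminus(U\cup V)$, $K=\{i\in S\cup T\cup R: y_i<b_i\}$ and $L=\{i\in S\cup T\cup R: y_i>a_i\}$. With $g(w)=\max(b-w,0)$ and $h(w)=\max(w-a,0)$ (componentwise), we have $$\|g(y)\|^2-\|g(x)\|^2=\sum_{i\in K}|y_i-b_i|^2-\sum_{i\in U}|x_i-b_i|^2$$ and $$\|h(y)\|^2-\|h(x)\|^2=\sum_{i\in L}|y_i-a_i|^2-\sum_{i\in V}|x_i-a_i|^2.$$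
   Context: For disjoint $A_1,A_2\subseteq N$, the KKT solution for $(A_1,A_2)$ is the unique triple $(x,s,t)\in(\mathbb{R}^n)^3$ with $x_{A_1}=b_{A_1}$, $x_{A_2}=a_{A_2}$, $s_i=0$ for $i\notin A_1$, $t_i=0$ for $i\notin A_2$, and $\tilde Qx+\tilde d+s+t=0$. The sets $C$ and $D$ are disjoint. $\|\cdot\|$ is the Euclidean norm. *)

theory Defs
  imports "HOL-Analysis.Analysis"
begin

text \<open>Index set N = {1..n} is modelled by a finite type 'n; vectors are real^'n.\<close>

definition is_KKT_solution ::
  "real^'n^'n \<Rightarrow> real^'n \<Rightarrow> real^'n \<Rightarrow> real^'n \<Rightarrow> 'n set \<Rightarrow> 'n set
    \<Rightarrow> real^'n \<Rightarrow> real^'n \<Rightarrow> real^'n \<Rightarrow> bool" where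
  "is_KKT_solution Q d a b A1 A2 x s t \<longleftrightarrow>
     (\<forall>i\<in>A1. x $ i = b $ i) \<and> (\<forall>i\<in>A2. x $ i = a $ i) \<and>
     (\<forall>i. i \<notin> A1 \<longrightarrow> s $ i = 0) \<and> (\<forall>i. i \<notin> A2 \<longrightarrow> t $ i = 0) \<and>
     Q *v x + d + s + t = 0"

definition KKT_solution ::
  "real^'n^'n \<Rightarrow> real^'n \<Rightarrow> real^'n \<Rightarrow> real^'n \<Rightarrow> 'n set \<Rightarrow> 'n set
    \<Rightarrow> (real^'n) \<times> (real^'n) \<times> (real^'n)" where
  "KKT_solution Q d a b A1 A2 =
     (THE (x, s, t). is_KKT_solution Q d a b A1 A2 x s t)"

definition gpos :: "real^'n \<Rightarrow> real^'n \<Rightarrow> real^'n" where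
  "gpos b w = (\<chi> i. max (b $ i - w $ i) 0)"

definition hpos :: "real^'n \<Rightarrow> real^'n \<Rightarrow> real^'n" where
  "hpos a w = (\<chi> i. max (w $ i - a $ i) 0)"

end

theory Submission imports Defs begin

text \<open>
  Both identities are pure bookkeeping of index sets. By the KKT conditions x sits on the lower
  bound on A and on the upper bound on B, so the violated lower bounds of x occur only in the free
  set I, i.e. in U (and the violated upper bounds only in V). Likewise y is on its bounds on C and D,
  and a case distinction shows that the complement of C \<union> D is exactly S \<union> T \<union> R, so the
  violations of y are K and L. It remains to know that the KKT solutions exist and are unique, which
  follows from positive definiteness of Q restricted to the free coordinates.
\<close>

lemma pos_def_vanishing:
  fixes Q :: "real^'n^'n" and z :: "real^'n"
  assumes pdQ: "\<forall>z. z \<noteq> 0 \<longrightarrow> z \<bullet> (Q *v z) > 0"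
    and off: "\<And>i. i \<notin> F \<Longrightarrow> z $ i = 0" and on: "\<And>i. i \<in> F \<Longrightarrow> (Q *v z) $ i = 0"
  shows "z = 0"
proof -
  have "z \<bullet> (Q *v z) = (\<Sum>i\<in>UNIV. z $ i * (Q *v z) $ i)" by (simp add: inner_vec_def)
  also have "\<dots> = 0" by (rule sum.neutral) (metis off on mult_zero_left mult_zero_right)
  finally show "z = 0" using pdQ by force
qed

lemma is_KKT_solution_exists:
  fixes Q :: "real^'n^'n" and d a b :: "real^'n"
  assumes pdQ: "\<forall>z. z \<noteq> 0 \<longrightarrow> z \<bullet> (Q *v z) > 0" and disj: "A1 \<inter> A2 = {}"
  shows "\<exists>x s t. is_KKT_solution Q d a b A1 A2 x s t"
proof -
  \<comment> \<open>Fix x on its bounds off the free set F and solve the remaining equations on F, a system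
    that is nonsingular because M is injective; the multipliers are then read off the residual.\<close>
  define F where "F = - (A1 \<union> A2)"
  define M where "M = (\<lambda>z::real^'n. \<chi> i. if i \<in> F then (Q *v z) $ i else z $ i)"
  have lin: "linear M"
    unfolding M_def
    by (rule linearI) (auto simp: vec_eq_iff matrix_vector_right_distrib matrix_vector_mult_scaleR)
  have "inj M"
  proof (subst linear_injective_0[OF lin], intro allI impI)
    fix z assume "M z = 0"
    then have "\<forall>i. (if i \<in> F then (Q *v z) $ i else z $ i) = 0" by (simp add: M_def vec_eq_iff)
    then show "z = 0" by (intro pos_def_vanishing[OF pdQ, of F]) metis+
  qed
  then have "surj M" using linear_injective_imp_surjective[OF lin] by simp
  define x0 where "x0 = (\<chi> i. if i \<in> A1 then b $ i else if i \<in> A2 then a $ i else 0)"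
  obtain z where z: "M z = - (\<chi> i. if i \<in> F then (Q *v x0 + d) $ i else 0)"
    using \<open>surj M\<close> by (metis surjD)
  define x where "x = x0 + z"
  define r where "r = - (Q *v x + d)"
  define s where "s = (\<chi> i. if i \<in> A1 then r $ i else 0)"
  define t where "t = (\<chi> i. if i \<in> A2 \<and> i \<notin> A1 then r $ i else 0)"
  have z_off: "\<And>i. i \<notin> F \<Longrightarrow> z $ i = 0"
    and Qz_on: "\<And>i. i \<in> F \<Longrightarrow> (Q *v z) $ i = - (Q *v x0 + d) $ i"
    using z by (auto simp: M_def vec_eq_iff split: if_splits dest: spec)
  have r_on: "\<And>i. i \<in> F \<Longrightarrow> r $ i = 0"
    using Qz_on by (simp add: r_def x_def matrix_vector_right_distrib)
  have "is_KKT_solution Q d a b A1 A2 x s t"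
    unfolding is_KKT_solution_def
  proof (intro conjI ballI allI impI)
    show "Q *v x + d + s + t = 0"
      unfolding vec_eq_iff using r_on
      by (auto simp: s_def t_def r_def F_def) (metis add.inverse_inverse add.left_inverse)
  qed (use z_off disj in \<open>auto simp: x_def x0_def s_def t_def F_def\<close>)
  then show ?thesis by blast
qed

lemma is_KKT_solution_unique:
  fixes Q :: "real^'n^'n" and d a b :: "real^'n"
  assumes pdQ: "\<forall>z. z \<noteq> 0 \<longrightarrow> z \<bullet> (Q *v z) > 0" and disj: "A1 \<inter> A2 = {}"
    and k1: "is_KKT_solution Q d a b A1 A2 x s t" and k2: "is_KKT_solution Q d a b A1 A2 x' s' t'"
  shows "x = x' \<and> s = s' \<and> t = t'"
proof -
  have s_eq: "\<And>i. i \<notin> A1 \<Longrightarrow> s $ i = s' $ i" and t_eq: "\<And>i. i \<notin> A2 \<Longrightarrow> t $ i = t' $ i"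
    using k1 k2 by (auto simp: is_KKT_solution_def)
  have "Q *v x + d + s + t = 0" and "Q *v x' + d + s' + t' = 0"
    using k1 k2 by (auto simp: is_KKT_solution_def)
  then have Qdiff: "Q *v (x - x') = - ((s - s') + (t - t'))"
    by (simp add: matrix_vector_mult_diff_distrib algebra_simps vec_eq_iff)
      (metis add.commute add_diff_cancel_left' diff_add_cancel)
  have "x - x' = 0"
  proof (rule pos_def_vanishing[OF pdQ, of "- (A1 \<union> A2)"])
    show "\<And>i. i \<notin> - (A1 \<union> A2) \<Longrightarrow> (x - x') $ i = 0"
      using k1 k2 by (auto simp: is_KKT_solution_def)
    show "\<And>i. i \<in> - (A1 \<union> A2) \<Longrightarrow> (Q *v (x - x')) $ i = 0"
      using Qdiff s_eq t_eq by auto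
  qed
  then have "(s - s') + (t - t') = 0"
    using Qdiff by (metis matrix_vector_mult_0_right neg_0_equal_iff_equal)
  then have st: "\<And>i. s $ i - s' $ i + (t $ i - t' $ i) = 0" by (simp add: vec_eq_iff)
  have "s $ i = s' $ i \<and> t $ i = t' $ i" for i
    using st[of i] s_eq[of i] t_eq[of i] disj by (cases "i \<in> A1") (auto simp: disjoint_iff)
  then show ?thesis using \<open>x - x' = 0\<close> by (simp add: vec_eq_iff)
qed

lemma is_KKT_solution_KKT_solution:
  fixes Q :: "real^'n^'n" and d a b :: "real^'n"
  assumes pdQ: "\<forall>z. z \<noteq> 0 \<longrightarrow> z \<bullet> (Q *v z) > 0" and disj: "A1 \<inter> A2 = {}"
    and sol: "KKT_solution Q d a b A1 A2 = (x, s, t)"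
  shows "is_KKT_solution Q d a b A1 A2 x s t"
proof -
  let ?P = "\<lambda>(x, s, t). is_KKT_solution Q d a b A1 A2 x s t"
  obtain x0 s0 t0 where k: "is_KKT_solution Q d a b A1 A2 x0 s0 t0"
    using is_KKT_solution_exists[OF pdQ disj] by blast
  have "\<exists>!p. ?P p"
  proof (rule ex1I[of _ "(x0, s0, t0)"])
    show "?P (x0, s0, t0)" using k by simp
  next
    fix p assume "?P p"
    then show "p = (x0, s0, t0)" using is_KKT_solution_unique[OF pdQ disj _ k] by (cases p) auto
  qed
  then have "?P (THE p. ?P p)" by (rule theI')
  then show ?thesis using sol by (simp add: KKT_solution_def)
qed

lemma KKT_violation_sets_disjoint:
  assumes kkt: "is_KKT_solution Q d a b A B x s t" and "A \<inter> B = {}" and ba: "\<forall>i. b $ i \<le> a $ i"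
  shows "{i. x $ i < b $ i \<or> s $ i < 0} \<inter> {i. x $ i > a $ i \<or> t $ i > 0} = {}"
proof -
  have "\<not> (x $ i < b $ i \<or> s $ i < 0) \<or> \<not> (x $ i > a $ i \<or> t $ i > 0)" for i
    using kkt \<open>A \<inter> B = {}\<close> ba[rule_format, of i] unfolding is_KKT_solution_def
    by (cases "i \<in> A"; cases "i \<in> B") auto
  then show ?thesis by blast
qed
lemma KKT_violations_free:
  assumes kkt: "is_KKT_solution Q d a b A1 A2 x s t" and ba: "\<forall>i. b $ i \<le> a $ i"
  shows "{i. x $ i < b $ i} = {i \<in> - (A1 \<union> A2). x $ i < b $ i}"
    and "{i. x $ i > a $ i} = {i \<in> - (A1 \<union> A2). x $ i > a $ i}"
proof -
  have "x $ i < b $ i \<Longrightarrow> i \<notin> A1 \<union> A2" and "x $ i > a $ i \<Longrightarrow> i \<notin> A1 \<union> A2" for i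
    using kkt ba[rule_format, of i] unfolding is_KKT_solution_def by auto
  then show "{i. x $ i < b $ i} = {i \<in> - (A1 \<union> A2). x $ i < b $ i}"
    and "{i. x $ i > a $ i} = {i \<in> - (A1 \<union> A2). x $ i > a $ i}" by auto
qed
lemma KKT_compl_violation_sets:
  assumes kkt: "is_KKT_solution Q d a b A B x s t" and "A \<inter> B = {}" and ba: "\<forall>i. b $ i \<le> a $ i"
  shows "{i\<in>A. s $ i \<ge> 0} \<union> {i\<in>B. t $ i \<le> 0}
           \<union> (- (A \<union> B) - ({i\<in>- (A \<union> B). x $ i < b $ i} \<union> {i\<in>- (A \<union> B). x $ i > a $ i}))
         = - ({i. x $ i < b $ i \<or> s $ i < 0} \<union> {i. x $ i > a $ i \<or> t $ i > 0})"
proof (rule set_eqI)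
  fix i
  show "i \<in> {i\<in>A. s $ i \<ge> 0} \<union> {i\<in>B. t $ i \<le> 0}
           \<union> (- (A \<union> B) - ({i\<in>- (A \<union> B). x $ i < b $ i} \<union> {i\<in>- (A \<union> B). x $ i > a $ i}))
        \<longleftrightarrow> i \<in> - ({i. x $ i < b $ i \<or> s $ i < 0} \<union> {i. x $ i > a $ i \<or> t $ i > 0})"
    using kkt \<open>A \<inter> B = {}\<close> ba[rule_format, of i] unfolding is_KKT_solution_def
    by (cases "i \<in> A"; cases "i \<in> B") auto
qed

lemma norm_gpos_squared:
  "(norm (gpos b (w::real^'n)))\<^sup>2 = (\<Sum>i\<in>{i. w $ i < b $ i}. \<bar>w $ i - b $ i\<bar>\<^sup>2)"
proof -
  have "(norm (gpos b w))\<^sup>2 = (\<Sum>i\<in>UNIV. (gpos b w $ i)\<^sup>2)"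
    unfolding power2_norm_eq_inner inner_vec_def by (simp add: power2_eq_square)
  also have "\<dots> = (\<Sum>i\<in>UNIV. if w $ i < b $ i then \<bar>w $ i - b $ i\<bar>\<^sup>2 else 0)"
    by (rule sum.cong) (auto simp: gpos_def max_def power2_commute)
  finally show ?thesis by (simp add: sum.inter_filter[symmetric])
qed

lemma norm_hpos_squared:
  "(norm (hpos a (w::real^'n)))\<^sup>2 = (\<Sum>i\<in>{i. w $ i > a $ i}. \<bar>w $ i - a $ i\<bar>\<^sup>2)"
proof -
  have "(norm (hpos a w))\<^sup>2 = (\<Sum>i\<in>UNIV. (hpos a w $ i)\<^sup>2)"
    unfolding power2_norm_eq_inner inner_vec_def by (simp add: power2_eq_square)
  also have "\<dots> = (\<Sum>i\<in>UNIV. if w $ i > a $ i then \<bar>w $ i - a $ i\<bar>\<^sup>2 else 0)"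
    by (rule sum.cong) (auto simp: hpos_def max_def)
  finally show ?thesis by (simp add: sum.inter_filter[symmetric])
qed

theorem mainTheorem2:
  fixes Q :: "real^'n^'n" and d a b :: "real^'n" and A B :: "'n set"
  assumes symQ: "transpose Q = Q"
    and pdQ: "\<forall>z. z \<noteq> 0 \<longrightarrow> z \<bullet> (Q *v z) > 0"
    and ba: "\<forall>i. b $ i \<le> a $ i"
    and disjAB: "A \<inter> B = {}"
    and xst: "KKT_solution Q d a b A B = (x, s, t)"
    and Cdef: "C = {i. x $ i < b $ i \<or> s $ i < 0}"
    and Ddef: "D = {i. x $ i > a $ i \<or> t $ i > 0}"
    and yuv: "KKT_solution Q d a b C D = (y, u, v)"
    and Idef: "I = UNIV - (A \<union> B)"
    and Sdef: "S = {i\<in>A. s $ i \<ge> 0}"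
    and Tdef: "T = {i\<in>B. t $ i \<le> 0}"
    and Udef: "U = {i\<in>I. x $ i < b $ i}"
    and Vdef: "V = {i\<in>I. x $ i > a $ i}"
    and Rdef: "R = I - (U \<union> V)"
    and Kdef: "K = {i\<in>S \<union> T \<union> R. y $ i < b $ i}"
    and Ldef: "L = {i\<in>S \<union> T \<union> R. y $ i > a $ i}"
  shows "((norm (gpos b y))\<^sup>2 - (norm (gpos b x))\<^sup>2
           = (\<Sum>i\<in>K. \<bar>y $ i - b $ i\<bar>\<^sup>2) - (\<Sum>i\<in>U. \<bar>x $ i - b $ i\<bar>\<^sup>2)) \<and>
         ((norm (hpos a y))\<^sup>2 - (norm (hpos a x))\<^sup>2
           = (\<Sum>i\<in>L. \<bar>y $ i - a $ i\<bar>\<^sup>2) - (\<Sum>i\<in>V. \<bar>x $ i - a $ i\<bar>\<^sup>2))"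
proof -
  have I: "I = - (A \<union> B)" using Idef by auto
  have kx: "is_KKT_solution Q d a b A B x s t"
    using is_KKT_solution_KKT_solution[OF pdQ disjAB xst] .
  have "C \<inter> D = {}"
    using KKT_violation_sets_disjoint[OF kx disjAB ba] by (simp add: Cdef Ddef)
  then have ky: "is_KKT_solution Q d a b C D y u v"
    using is_KKT_solution_KKT_solution[OF pdQ _ yuv] by blast
  have "S \<union> T \<union> R = - (C \<union> D)"
    using KKT_compl_violation_sets[OF kx disjAB ba] by (simp add: Sdef Tdef Rdef Udef Vdef I Cdef Ddef)
  then have "{i. y $ i < b $ i} = K" and "{i. y $ i > a $ i} = L"
    using KKT_violations_free[OF ky ba] by (simp_all add: Kdef Ldef)
  moreover have "{i. x $ i < b $ i} = U" and "{i. x $ i > a $ i} = V"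
    using KKT_violations_free[OF kx ba] by (simp_all add: Udef Vdef I)
  ultimately show ?thesis by (simp add: norm_gpos_squared norm_hpos_squared)
qed

end
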